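(* Let $K$ be a $b$-complete idempotent semifield and $V$ an idempotent $b$-space over $K$. (i) Every $a$-linear functional defined on a $b$-subspace $W$ of $V$ extends to an $a$-linear functional on $V$. (ii) If $x,y\in V$ and $x\neq y$, then there is an $a$-linear functional $f$ on $V$ with $f(x)\neq f(y)$.
   Context: An idempotent semigroup is a set with a commutative, associative, idempotent operation $\oplus$, ordered by $x\preceq y$ iff $x\oplus y=y$; $\oplus X$, $\wedge X$ are least upper/greatest lower bounds. $b$-complete: every bounded above subset (including $\emptyset$) has a least upper bound; $a$-complete: every subset has least upper and greatest lower bounds; $\mathbf 0=\oplus\emptyset$. The normal completion $\widehat S$ is the completion by cuts. A homomorphism $f$ of $b$-complete semigroups is a $b$-homomorphism if $f(\oplus X)=\oplus f(X)$ for all bounded above $X$, an $a$-homomorphism if it is a $b$-homomorphism extending to a homomorphism of normal completions that preserves least upper bounds of all subsets. An idempotent semiring has commutative idempotent associative $\oplus$, associative $\odot$ distributing on both sides, unit $\mathbf 1$, zero $\mathbf 0$; it is $b$-complete if $b$-complete as a semigroup with $k\odot(\oplus X)=\oplus(k\odot X)$, $(\oplus X)\odot k=\oplus(X\odot k)$ for bounded $X$; a semifield if nonzero elements are invertible. An idempotent semimodule over $K$ is an idempotent semigroup with an associative, bi-distributive action of $K$ with $\mathbf 1\odot x=x$, $\mathbf 0\odot x=\mathbf 0$; it is $b$-complete if $b$-complete as a semigroup and $(\oplus Q)\odot x=\oplus(Q\odot x)$, $k\odot(\oplus X)=\oplus(k\odot X)$ for bounded $Q\subset K$, $X\subset V$;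 $a$-complete if moreover it has a greatest element $\infty$. For $b$-complete semifield $K$, an idempotent $b$-space is a $b$-complete semimodule with $(\wedge Q)\odot x=\wedge(Q\odot x)$ for all nonempty $Q\subset K$ and $x\neq\infty$. A map $p$ is linear if it preserves $\oplus$ and scalar multiplication; $b$-linear if it is moreover a $b$-homomorphism; $a$-linear if it moreover extends to an $a$-homomorphism of normal completions. A linear functional on $V$ is a linear map $V\to\widehat K$. A $b$-subspace of $V$ is a subsemigroup $W\subset V$ closed under multiplication by elements of $K$ such that the embedding $W\to V$ extends to a $b$-linear mapping. *)

theory Defs
  imports Main
begin

definition idem_le :: "('a \<Rightarrow> 'a \<Rightarrow> 'a) \<Rightarrow> 'a \<Rightarrow> 'a \<Rightarrow> bool" where
  "idem_le add x y \<longleftrightarrow> add x y = y"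

definition upper_bounds :: "('a \<Rightarrow> 'a \<Rightarrow> bool) \<Rightarrow> 'a set \<Rightarrow> 'a set \<Rightarrow> 'a set" where
  "upper_bounds le S A = {u \<in> S. \<forall>a\<in>A. le a u}"

definition lower_bounds :: "('a \<Rightarrow> 'a \<Rightarrow> bool) \<Rightarrow> 'a set \<Rightarrow> 'a set \<Rightarrow> 'a set" where
  "lower_bounds le S A = {l \<in> S. \<forall>a\<in>A. le l a}"

definition is_lub :: "('a \<Rightarrow> 'a \<Rightarrow> bool) \<Rightarrow> 'a set \<Rightarrow> 'a set \<Rightarrow> 'a \<Rightarrow> bool" where
  "is_lub le S A s \<longleftrightarrow> s \<in> upper_bounds le S A \<and> (\<forall>u\<in>upper_bounds le S A. le s u)"

definition is_glb :: "('a \<Rightarrow> 'a \<Rightarrow> bool) \<Rightarrow> 'a set \<Rightarrow> 'a set \<Rightarrow> 'a \<Rightarrow> bool" where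
  "is_glb le S A g \<longleftrightarrow> g \<in> lower_bounds le S A \<and> (\<forall>l\<in>lower_bounds le S A. le l g)"

definition is_greatest :: "('a \<Rightarrow> 'a \<Rightarrow> bool) \<Rightarrow> 'a set \<Rightarrow> 'a \<Rightarrow> bool" where
  "is_greatest le S t \<longleftrightarrow> t \<in> S \<and> (\<forall>x\<in>S. le x t)"

definition b_complete_on :: "('a \<Rightarrow> 'a \<Rightarrow> bool) \<Rightarrow> 'a set \<Rightarrow> bool" where
  "b_complete_on le S \<longleftrightarrow>
     (\<forall>A. A \<subseteq> S \<longrightarrow> upper_bounds le S A \<noteq> {} \<longrightarrow> (\<exists>s. is_lub le S A s))"

definition cuts :: "('a \<Rightarrow> 'a \<Rightarrow> bool) \<Rightarrow> 'a set \<Rightarrow> 'a set set" where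
  "cuts le S = {A. A \<subseteq> S \<and> A = lower_bounds le S (upper_bounds le S A)}"

text \<open>Least upper bound of a family of cuts (cuts are ordered by inclusion).\<close>
definition cut_sup :: "('a \<Rightarrow> 'a \<Rightarrow> bool) \<Rightarrow> 'a set \<Rightarrow> 'a set set \<Rightarrow> 'a set" where
  "cut_sup le S \<A> = lower_bounds le S (upper_bounds le S (\<Union>\<A>))"

definition principal_cut :: "('a \<Rightarrow> 'a \<Rightarrow> bool) \<Rightarrow> 'a set \<Rightarrow> 'a \<Rightarrow> 'a set" where
  "principal_cut le S x = lower_bounds le S {x}"

definition idem_semigroup :: "('a \<Rightarrow> 'a \<Rightarrow> 'a) \<Rightarrow> bool" where
  "idem_semigroup add \<longleftrightarrow>
     (\<forall>x y z. add (add x y) z = add x (add y z)) \<and> (\<forall>x y. add x y = add y x) \<and> (\<forall>x. add x x = x)"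

definition idem_semiring :: "('k \<Rightarrow> 'k \<Rightarrow> 'k) \<Rightarrow> ('k \<Rightarrow> 'k \<Rightarrow> 'k) \<Rightarrow> 'k \<Rightarrow> 'k \<Rightarrow> bool" where
  "idem_semiring addK mulK zeroK oneK \<longleftrightarrow>
     idem_semigroup addK \<and>
     (\<forall>x y z. mulK (mulK x y) z = mulK x (mulK y z)) \<and>
     (\<forall>x y z. mulK x (addK y z) = addK (mulK x y) (mulK x z)) \<and>
     (\<forall>x y z. mulK (addK x y) z = addK (mulK x z) (mulK y z)) \<and>
     (\<forall>x. mulK oneK x = x \<and> mulK x oneK = x) \<and>
     (\<forall>x. addK zeroK x = x) \<and>
     (\<forall>x. mulK zeroK x = zeroK \<and> mulK x zeroK = zeroK)"

definition b_complete_semiring :: "('k \<Rightarrow> 'k \<Rightarrow> 'k) \<Rightarrow> ('k \<Rightarrow> 'k \<Rightarrow> 'k) \<Rightarrow> 'k \<Rightarrow> 'k \<Rightarrow> bool" where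
  "b_complete_semiring addK mulK zeroK oneK \<longleftrightarrow>
     idem_semiring addK mulK zeroK oneK \<and>
     b_complete_on (idem_le addK) UNIV \<and>
     (\<forall>k X s. is_lub (idem_le addK) UNIV X s \<longrightarrow>
        is_lub (idem_le addK) UNIV (mulK k ` X) (mulK k s) \<and>
        is_lub (idem_le addK) UNIV ((\<lambda>x. mulK x k) ` X) (mulK s k))"

definition semifield :: "('k \<Rightarrow> 'k \<Rightarrow> 'k) \<Rightarrow> 'k \<Rightarrow> 'k \<Rightarrow> bool" where
  "semifield mulK zeroK oneK \<longleftrightarrow> (\<forall>x. x \<noteq> zeroK \<longrightarrow> (\<exists>y. mulK x y = oneK \<and> mulK y x = oneK))"

definition idem_semimodule ::
  "('k \<Rightarrow> 'k \<Rightarrow> 'k) \<Rightarrow> ('k \<Rightarrow> 'k \<Rightarrow> 'k) \<Rightarrow> 'k \<Rightarrow> 'k \<Rightarrow> ('v \<Rightarrow> 'v \<Rightarrow> 'v) \<Rightarrow> ('k \<Rightarrow> 'v \<Rightarrow> 'v) \<Rightarrow> bool" where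
  "idem_semimodule addK mulK zeroK oneK addV smul \<longleftrightarrow>
     idem_semiring addK mulK zeroK oneK \<and> idem_semigroup addV \<and>
     (\<forall>k l x. smul (mulK k l) x = smul k (smul l x)) \<and>
     (\<forall>k x y. smul k (addV x y) = addV (smul k x) (smul k y)) \<and>
     (\<forall>k l x. smul (addK k l) x = addV (smul k x) (smul l x)) \<and>
     (\<forall>x. smul oneK x = x) \<and>
     (\<forall>x y. addV (smul zeroK x) y = y)"

definition b_complete_semimodule ::
  "('k \<Rightarrow> 'k \<Rightarrow> 'k) \<Rightarrow> ('k \<Rightarrow> 'k \<Rightarrow> 'k) \<Rightarrow> 'k \<Rightarrow> 'k \<Rightarrow> ('v \<Rightarrow> 'v \<Rightarrow> 'v) \<Rightarrow> ('k \<Rightarrow> 'v \<Rightarrow> 'v) \<Rightarrow> bool" where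
  "b_complete_semimodule addK mulK zeroK oneK addV smul \<longleftrightarrow>
     idem_semimodule addK mulK zeroK oneK addV smul \<and>
     b_complete_on (idem_le addV) UNIV \<and>
     (\<forall>Q s x. is_lub (idem_le addK) UNIV Q s \<longrightarrow>
        is_lub (idem_le addV) UNIV ((\<lambda>q. smul q x) ` Q) (smul s x)) \<and>
     (\<forall>k X s. is_lub (idem_le addV) UNIV X s \<longrightarrow>
        is_lub (idem_le addV) UNIV (smul k ` X) (smul k s))"

text \<open>Idempotent b-space (over a b-complete semifield, assumed separately).
  The condition "x different from infinity" means: x is not the greatest element of V.\<close>
definition b_space ::
  "('k \<Rightarrow> 'k \<Rightarrow> 'k) \<Rightarrow> ('k \<Rightarrow> 'k \<Rightarrow> 'k) \<Rightarrow> 'k \<Rightarrow> 'k \<Rightarrow> ('v \<Rightarrow> 'v \<Rightarrow> 'v) \<Rightarrow> ('k \<Rightarrow> 'v \<Rightarrow> 'v) \<Rightarrow> bool" where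
  "b_space addK mulK zeroK oneK addV smul \<longleftrightarrow>
     b_complete_semimodule addK mulK zeroK oneK addV smul \<and>
     (\<forall>Q x g. Q \<noteq> {} \<longrightarrow> \<not> is_greatest (idem_le addV) UNIV x \<longrightarrow>
        is_glb (idem_le addK) UNIV Q g \<longrightarrow>
        is_glb (idem_le addV) UNIV ((\<lambda>q. smul q x) ` Q) (smul g x))"

text \<open>b-subspace: a subsemigroup closed under scalars such that the embedding into V is
  b-linear, i.e. W is b-complete in the induced order and the embedding preserves
  least upper bounds of subsets bounded in W.\<close>
definition b_subspace :: "('v \<Rightarrow> 'v \<Rightarrow> 'v) \<Rightarrow> ('k \<Rightarrow> 'v \<Rightarrow> 'v) \<Rightarrow> 'v set \<Rightarrow> bool" where
  "b_subspace addV smul W \<longleftrightarrow>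
     W \<noteq> {} \<and>
     (\<forall>x\<in>W. \<forall>y\<in>W. addV x y \<in> W) \<and>
     (\<forall>k. \<forall>x\<in>W. smul k x \<in> W) \<and>
     b_complete_on (idem_le addV) W \<and>
     (\<forall>X s. X \<subseteq> W \<longrightarrow> is_lub (idem_le addV) W X s \<longrightarrow> is_lub (idem_le addV) UNIV X s)"

text \<open>Khat = normal completion of K (cuts of K, ordered by inclusion); sup of a family of cuts;
  the action of K on Khat (extension of multiplication).\<close>
definition khat_sup :: "('k \<Rightarrow> 'k \<Rightarrow> 'k) \<Rightarrow> 'k set set \<Rightarrow> 'k set" where
  "khat_sup addK \<A> = cut_sup (idem_le addK) UNIV \<A>"

definition khat_act :: "('k \<Rightarrow> 'k \<Rightarrow> 'k) \<Rightarrow> ('k \<Rightarrow> 'k \<Rightarrow> 'k) \<Rightarrow> 'k \<Rightarrow> 'k set \<Rightarrow> 'k set" where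
  "khat_act addK mulK k A = cut_sup (idem_le addK) UNIV {mulK k ` A}"

definition linear_functional ::
  "('k \<Rightarrow> 'k \<Rightarrow> 'k) \<Rightarrow> ('k \<Rightarrow> 'k \<Rightarrow> 'k) \<Rightarrow> ('v \<Rightarrow> 'v \<Rightarrow> 'v) \<Rightarrow> ('k \<Rightarrow> 'v \<Rightarrow> 'v) \<Rightarrow> 'v set \<Rightarrow> ('v \<Rightarrow> 'k set) \<Rightarrow> bool" where
  "linear_functional addK mulK addV smul W f \<longleftrightarrow>
     (\<forall>x\<in>W. f x \<in> cuts (idem_le addK) UNIV) \<and>
     (\<forall>x\<in>W. \<forall>y\<in>W. f (addV x y) = khat_sup addK {f x, f y}) \<and>
     (\<forall>k. \<forall>x\<in>W. f (smul k x) = khat_act addK mulK k (f x))"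

definition b_linear_functional ::
  "('k \<Rightarrow> 'k \<Rightarrow> 'k) \<Rightarrow> ('k \<Rightarrow> 'k \<Rightarrow> 'k) \<Rightarrow> ('v \<Rightarrow> 'v \<Rightarrow> 'v) \<Rightarrow> ('k \<Rightarrow> 'v \<Rightarrow> 'v) \<Rightarrow> 'v set \<Rightarrow> ('v \<Rightarrow> 'k set) \<Rightarrow> bool" where
  "b_linear_functional addK mulK addV smul W f \<longleftrightarrow>
     linear_functional addK mulK addV smul W f \<and>
     (\<forall>X s. X \<subseteq> W \<longrightarrow> is_lub (idem_le addV) W X s \<longrightarrow> f s = khat_sup addK (f ` X))"

text \<open>a-linear: b-linear and extends (along the canonical embedding) to a map of the normal
  completions preserving least upper bounds of all subsets.  The completion of Khat is
  identified with Khat itself (Khat is a complete lattice).\<close>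
definition a_linear_functional ::
  "('k \<Rightarrow> 'k \<Rightarrow> 'k) \<Rightarrow> ('k \<Rightarrow> 'k \<Rightarrow> 'k) \<Rightarrow> ('v \<Rightarrow> 'v \<Rightarrow> 'v) \<Rightarrow> ('k \<Rightarrow> 'v \<Rightarrow> 'v) \<Rightarrow> 'v set \<Rightarrow> ('v \<Rightarrow> 'k set) \<Rightarrow> bool" where
  "a_linear_functional addK mulK addV smul W f \<longleftrightarrow>
     b_linear_functional addK mulK addV smul W f \<and>
     (\<exists>F :: 'v set \<Rightarrow> 'k set.
        (\<forall>x\<in>W. F (principal_cut (idem_le addV) W x) = f x) \<and>
        (\<forall>\<A>. \<A> \<subseteq> cuts (idem_le addV) W \<longrightarrow>
           F (cut_sup (idem_le addV) W \<A>) = khat_sup addK (F ` \<A>)))"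

end

theory Submission
  imports Defs
begin

text \<open>
  Elements of the normal completion Khat of a b-complete semifield K are cuts, and a cut
  A is recovered from its set of upper bounds as A = lowK (upK A).  A functional on V is
  therefore conveniently described by a family of "coefficient sets" R x \<subseteq> K (each empty
  or a principal up-set), via x \<mapsto> lowK (R x), i.e. the cut below the infimum of R x.  Two instances do the work:
    (level)  R x = K if x \<le> d and R x = {} otherwise, for a scalar-invariant d;
    (gauge)  R x = {k. x \<le> k \<odot> y} for an element y that is not the greatest one.
  The level functionals are needed only when K is Boolean (every k \<le> 1); otherwise K has
  no least positive element and gauge functionals suffice.
  Separation: if x \<not>\<le> y, the level (resp. gauge) functional built from y separates x, y.
  Extension: for an a-linear f on a b-subspace W, the elements w of W with f w \<le> \<beta>
  have a least upper bound y0 in W (this uses the extension of f to the normal completion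
  of W), and the level (\<beta> = 0) resp. gauge (\<beta> = 1) functional of y0 agrees with f on W.
\<close>

section \<open>b-complete idempotent semifields and their normal completion\<close>

locale idem_b_semifield =
  fixes addK mulK :: "'k \<Rightarrow> 'k \<Rightarrow> 'k" and zeroK oneK :: 'k
  assumes K: "b_complete_semiring addK mulK zeroK oneK"
    and SF: "semifield mulK zeroK oneK"
begin

abbreviation leK where "leK \<equiv> idem_le addK"
abbreviation lowK where "lowK \<equiv> lower_bounds leK UNIV"
abbreviation upK where "upK \<equiv> upper_bounds leK UNIV"

lemma SR: "idem_semiring addK mulK zeroK oneK"
  using K by (simp add: b_complete_semiring_def)

lemma Kbc: "b_complete_on leK UNIV"
  using K by (simp add: b_complete_semiring_def)

lemma addK_assoc: "addK (addK x y) z = addK x (addK y z)"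
  and addK_comm: "addK x y = addK y x"
  and addK_idem: "addK x x = x"
  using SR unfolding idem_semiring_def idem_semigroup_def by blast+

lemma mulK_assoc: "mulK (mulK x y) z = mulK x (mulK y z)"
  and distL: "mulK x (addK y z) = addK (mulK x y) (mulK x z)"
  and distR: "mulK (addK x y) z = addK (mulK x z) (mulK y z)"
  using SR by (simp_all add: idem_semiring_def)

lemma one_l[simp]: "mulK oneK x = x"
  and one_r[simp]: "mulK x oneK = x"
  and zero_add[simp]: "addK zeroK x = x"
  and zero_l[simp]: "mulK zeroK x = zeroK"
  and zero_r[simp]: "mulK x zeroK = zeroK"
  using SR by (simp_all add: idem_semiring_def)

lemma leK_refl[simp]: "leK x x"
  by (simp add: idem_le_def addK_idem)

lemma leK_trans: "leK x y \<Longrightarrow> leK y z \<Longrightarrow> leK x z"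
  by (simp add: idem_le_def) (metis addK_assoc)

lemma leK_antisym: "leK x y \<Longrightarrow> leK y x \<Longrightarrow> x = y"
  by (simp add: idem_le_def) (metis addK_comm)

lemma leK_zero[simp]: "leK zeroK x"
  by (simp add: idem_le_def)

lemma mulK_monoL: "leK a b \<Longrightarrow> leK (mulK c a) (mulK c b)"
  by (simp add: idem_le_def) (metis distL)

lemma mulK_monoR: "leK a b \<Longrightarrow> leK (mulK a c) (mulK b c)"
  by (simp add: idem_le_def) (metis distR)

definition invK :: "'k \<Rightarrow> 'k" where
  "invK k = (SOME j. mulK k j = oneK \<and> mulK j k = oneK)"

lemma invK: "k \<noteq> zeroK \<Longrightarrow> mulK k (invK k) = oneK \<and> mulK (invK k) k = oneK"
  unfolding invK_def by (rule someI_ex) (use SF in \<open>simp add: semifield_def\<close>)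

lemma mul_invK_cancel: "k \<noteq> zeroK \<Longrightarrow> mulK k (mulK (invK k) c) = c"
  and invK_mul_cancel: "k \<noteq> zeroK \<Longrightarrow> mulK (invK k) (mulK k c) = c"
  by (metis invK mulK_assoc one_l)+

lemma invK_nonzero: "k \<noteq> zeroK \<Longrightarrow> invK k \<noteq> zeroK"
  by (metis invK zero_r one_r)

lemma mulK_surj: "k \<noteq> zeroK \<Longrightarrow> mulK k ` UNIV = UNIV"
  by (metis mul_invK_cancel surj_def)

lemma le_mul_iff: "k \<noteq> zeroK \<Longrightarrow> leK c (mulK k r) \<longleftrightarrow> leK (mulK (invK k) c) r"
  and mul_le_iff: "k \<noteq> zeroK \<Longrightarrow> leK (mulK k c) r \<longleftrightarrow> leK c (mulK (invK k) r)"
  by (metis mulK_monoL mul_invK_cancel invK_mul_cancel)+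

text \<open>The dichotomy behind the two kinds of functionals: either K is Boolean (all scalars
  lie below 1, so every nonzero scalar equals 1), or 0 is the only lower bound of the
  nonzero scalars.\<close>

lemma boolean_nonzero_eq_one:
  assumes bool: "\<forall>k. leK k oneK" and c: "c \<noteq> zeroK"
  shows "c = oneK"
proof -
  have "leK (mulK c (invK c)) (mulK c oneK)"
    using bool mulK_monoL by blast
  then have "leK oneK c"
    using c invK by simp
  then show ?thesis
    using bool leK_antisym by blast
qed

lemma lowK_nonzero:
  assumes k0: "\<not> leK k0 oneK"
  shows "lowK (- {zeroK}) = {zeroK}"
proof (intro equalityI subsetI)
  fix c assume c: "c \<in> lowK (- {zeroK})"
  show "c \<in> {zeroK}"
  proof (rule ccontr)
    assume "c \<notin> {zeroK}"
    then have cz: "c \<noteq> zeroK" by simp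
    have k0z: "k0 \<noteq> zeroK" using k0 by auto
    have "mulK c (invK k0) \<noteq> zeroK"
      using cz invK_nonzero[OF k0z] by (metis invK_mul_cancel zero_r)
    then have "leK c (mulK c (invK k0))"
      using c by (simp add: lower_bounds_def)
    then have "leK (mulK (invK c) c) (mulK (invK c) (mulK c (invK k0)))"
      by (rule mulK_monoL)
    then have "leK oneK (invK k0)"
      using cz invK by (simp add: invK_mul_cancel)
    then have "leK (mulK oneK k0) (mulK (invK k0) k0)"
      by (rule mulK_monoR)
    then show False
      using k0 k0z invK by simp
  qed
qed (simp add: lower_bounds_def)

lemma lowK_iff: "c \<in> lowK S \<longleftrightarrow> (\<forall>a\<in>S. leK c a)"
  and upK_iff: "u \<in> upK S \<longleftrightarrow> (\<forall>a\<in>S. leK a u)"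
  by (simp_all add: lower_bounds_def upper_bounds_def)

lemma lowK_antimono: "A \<subseteq> B \<Longrightarrow> lowK B \<subseteq> lowK A"
  unfolding lower_bounds_def by blast

lemma zero_lowK: "zeroK \<in> lowK S"
  by (simp add: lowK_iff)

lemma cut_eq: "A \<in> cuts leK UNIV \<Longrightarrow> A = lowK (upK A)"
  by (simp add: cuts_def)

lemma zero_in_cut: "A \<in> cuts leK UNIV \<Longrightarrow> zeroK \<in> A"
  using cut_eq zero_lowK by metis

lemma lowK_empty[simp]: "lowK {} = UNIV"
  by (simp add: lower_bounds_def)

lemma UNIV_principal: "\<exists>r. UNIV = {k. leK r k}"
  by (intro exI[of _ zeroK]) simp

lemma lowK_zero: "zeroK \<in> S \<Longrightarrow> lowK S = {zeroK}"
  by (auto simp: lowK_iff intro: leK_antisym)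

lemma lowK_UNIV: "lowK UNIV = {zeroK}"
  by (simp add: lowK_zero)

lemma lowK_upK_lowK: "lowK (upK (lowK S)) = lowK S"
  and upK_lowK_upK: "upK (lowK (upK S)) = upK S"
  by (auto simp: lowK_iff upK_iff)

lemma khat_sup_eq: "khat_sup addK \<A> = lowK (upK (\<Union>\<A>))"
  and khat_act_eq: "khat_act addK mulK k A = lowK (upK (mulK k ` A))"
  by (simp_all add: khat_sup_def khat_act_def cut_sup_def)

lemma upK_khat_sup: "upK (khat_sup addK \<A>) = upK (\<Union>\<A>)"
  and upK_khat_act: "upK (khat_act addK mulK k A) = {m. \<forall>a\<in>A. leK (mulK k a) m}"
  by (auto simp: khat_sup_eq khat_act_eq upK_lowK_upK upK_iff)

lemma khat_sup_upper: "A \<in> \<A> \<Longrightarrow> A \<subseteq> khat_sup addK \<A>"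
  unfolding khat_sup_eq by (auto simp: lowK_iff upK_iff)

lemma khat_sup_assoc:
  "lowK (upK (\<Union>i\<in>I. lowK (upK (T i)))) = lowK (upK (\<Union>i\<in>I. T i))"
proof -
  have "upK (\<Union>i\<in>I. lowK (upK (T i))) = upK (\<Union>i\<in>I. T i)"
    by (auto simp: upK_iff lowK_iff)
  then show ?thesis by simp
qed

lemma lowK_cong:
  assumes "U \<subseteq> A \<union> {u. \<forall>c. leK c u}" "A \<subseteq> U"
  shows "lowK A = lowK U"
  using assms unfolding lowK_iff set_eq_iff by blast

lemma lowK_scale:
  assumes k: "k \<noteq> zeroK"
  shows "lowK (mulK k ` R) = lowK (upK (mulK k ` lowK R))"
proof (rule set_eqI)
  fix c
  have "c \<in> lowK (mulK k ` R) \<longleftrightarrow> mulK (invK k) c \<in> lowK (upK (lowK R))"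
    using k by (auto simp: lowK_upK_lowK lowK_iff le_mul_iff)
  also have "\<dots> \<longleftrightarrow> c \<in> lowK (upK (mulK k ` lowK R))"
  proof
    assume A: "mulK (invK k) c \<in> lowK (upK (lowK R))"
    show "c \<in> lowK (upK (mulK k ` lowK R))"
    proof (unfold lowK_iff, intro ballI)
      fix u assume "u \<in> upK (mulK k ` lowK R)"
      then have "mulK (invK k) u \<in> upK (lowK R)"
        using k by (auto simp: upK_iff mul_le_iff)
      then have "leK (mulK (invK k) c) (mulK (invK k) u)"
        using A by (simp add: lowK_iff)
      then show "leK c u"
        using k by (metis mul_invK_cancel mulK_monoL)
    qed
  next
    assume A: "c \<in> lowK (upK (mulK k ` lowK R))"
    show "mulK (invK k) c \<in> lowK (upK (lowK R))"
    proof (unfold lowK_iff, intro ballI)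
      fix v assume "v \<in> upK (lowK R)"
      then have "mulK k v \<in> upK (mulK k ` lowK R)"
        by (auto simp: upK_iff mulK_monoL)
      then have "leK c (mulK k v)"
        using A by (simp add: lowK_iff)
      then show "leK (mulK (invK k) c) v"
        using k le_mul_iff by blast
    qed
  qed
  finally show "c \<in> lowK (mulK k ` R) \<longleftrightarrow> c \<in> lowK (upK (mulK k ` lowK R))" .
qed

lemma khat_sup_lowK_Inter:
  assumes principal: "\<forall>x\<in>X. R x = {} \<or> (\<exists>r. R x = {k. leK r k})"
  shows "khat_sup addK ((\<lambda>x. lowK (R x)) ` X) = lowK (\<Inter>x\<in>X. R x)"
proof -
  have "u \<in> R x" if x: "x \<in> X" and u: "\<forall>c\<in>lowK (R x). leK c u" and ntop: "\<not> (\<forall>c. leK c u)"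
    for x u
  proof (cases "R x = {}")
    case False
    then obtain r where r: "R x = {k. leK r k}" using principal x by blast
    then have "r \<in> lowK (R x)" by (simp add: lowK_iff)
    then show ?thesis using u r by simp
  qed (use u ntop in simp)
  then have "upK (\<Union>x\<in>X. lowK (R x)) \<subseteq> (\<Inter>x\<in>X. R x) \<union> {u. \<forall>c. leK c u}"
    by (intro subsetI) (auto simp: upK_iff)
  moreover have "(\<Inter>x\<in>X. R x) \<subseteq> upK (\<Union>x\<in>X. lowK (R x))"
    by (auto simp: upK_iff lowK_iff)
  ultimately show ?thesis
    unfolding khat_sup_eq image_image by (metis lowK_cong)
qed

text \<open>In a b-complete semiring every nonempty set has an infimum (the supremum of its
  lower bounds, which are bounded above).\<close>

lemma glb_exists:
  assumes "Q \<noteq> {}"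
  shows "\<exists>g. is_glb leK UNIV Q g"
proof -
  obtain q where q: "q \<in> Q" using assms by blast
  then have "q \<in> upK (lowK Q)" by (simp add: upK_iff lowK_iff)
  then obtain g where g: "is_lub leK UNIV (lowK Q) g"
    using Kbc unfolding b_complete_on_def by blast
  then have "is_glb leK UNIV Q g"
    unfolding is_lub_def is_glb_def by (auto simp: upper_bounds_def lower_bounds_def)
  then show ?thesis by blast
qed

end

section \<open>Idempotent b-spaces\<close>

locale idem_b_space = idem_b_semifield addK mulK zeroK oneK
  for addK mulK :: "'k \<Rightarrow> 'k \<Rightarrow> 'k" and zeroK oneK :: 'k +
  fixes addV :: "'v \<Rightarrow> 'v \<Rightarrow> 'v" and smul :: "'k \<Rightarrow> 'v \<Rightarrow> 'v"
  assumes V: "b_space addK mulK zeroK oneK addV smul"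
begin

abbreviation leV where "leV \<equiv> idem_le addV"

abbreviation a_linear :: "'v set \<Rightarrow> ('v \<Rightarrow> 'k set) \<Rightarrow> bool" where
  "a_linear \<equiv> a_linear_functional addK mulK addV smul"

lemma SM: "idem_semimodule addK mulK zeroK oneK addV smul"
  using V by (simp add: b_space_def b_complete_semimodule_def)

lemma b_space_glb:
  "Q \<noteq> {} \<Longrightarrow> \<not> is_greatest leV UNIV x \<Longrightarrow> is_glb leK UNIV Q g \<Longrightarrow>
   is_glb leV UNIV ((\<lambda>q. smul q x) ` Q) (smul g x)"
  using V by (simp add: b_space_def)

lemma addV_assoc: "addV (addV x y) z = addV x (addV y z)"
  and addV_comm: "addV x y = addV y x"
  and addV_idem: "addV x x = x"
  using SM unfolding idem_semimodule_def idem_semigroup_def by blast+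

lemma smul_mul: "smul (mulK k l) x = smul k (smul l x)"
  and smul_add: "smul k (addV x y) = addV (smul k x) (smul k y)"
  and add_smul: "smul (addK k l) x = addV (smul k x) (smul l x)"
  and smul_one[simp]: "smul oneK x = x"
  and smul_zero_add[simp]: "addV (smul zeroK x) y = y"
  using SM by (simp_all add: idem_semimodule_def)

lemma leV_refl[simp]: "leV x x"
  by (simp add: idem_le_def addV_idem)

lemma leV_trans: "leV x y \<Longrightarrow> leV y z \<Longrightarrow> leV x z"
  by (simp add: idem_le_def) (metis addV_assoc)

lemma leV_antisym: "leV x y \<Longrightarrow> leV y x \<Longrightarrow> x = y"
  by (simp add: idem_le_def) (metis addV_comm)

lemma leV_zero[simp]: "leV (smul zeroK x) y"
  by (simp add: idem_le_def)

lemma leV_add_iff: "leV (addV x y) z \<longleftrightarrow> leV x z \<and> leV y z"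
  unfolding idem_le_def by (metis addV_assoc addV_comm addV_idem)

lemma smul_monoV: "leV x y \<Longrightarrow> leV (smul k x) (smul k y)"
  by (simp add: idem_le_def) (metis smul_add)

lemma smul_monoK: "leK k l \<Longrightarrow> leV (smul k x) (smul l x)"
  by (simp add: idem_le_def) (metis add_smul)

lemma smul_invK_cancel: "k \<noteq> zeroK \<Longrightarrow> smul k (smul (invK k) x) = x"
  and invK_smul_cancel: "k \<noteq> zeroK \<Longrightarrow> smul (invK k) (smul k x) = x"
  by (metis invK smul_mul smul_one)+

lemma le_smul_iff:
  assumes k: "k \<noteq> zeroK"
  shows "leV x (smul k y) \<longleftrightarrow> leV (smul (invK k) x) y"
  using smul_monoV[of x "smul k y" "invK k"] smul_monoV[of "smul (invK k) x" y k]
  by (auto simp: smul_invK_cancel invK_smul_cancel k)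

text \<open>For y not the greatest element, the scalars k with x \<le> k y form an empty or a
  principal up-set of K: this is where the b-space axiom on infima enters.\<close>

lemma dominating_scalars_principal:
  assumes ng: "\<not> is_greatest leV UNIV y"
  shows "{k. leV x (smul k y)} = {} \<or> (\<exists>r. {k. leV x (smul k y)} = {k. leK r k})"
proof (cases "{k. leV x (smul k y)} = {}")
  case False
  then obtain g where g: "is_glb leK UNIV {k. leV x (smul k y)} g"
    using glb_exists[OF False] by blast
  have "is_glb leV UNIV ((\<lambda>q. smul q y) ` {k. leV x (smul k y)}) (smul g y)"
    by (rule b_space_glb[OF False ng g])
  then have xg: "leV x (smul g y)"
    by (auto simp: is_glb_def lower_bounds_def)
  have "{k. leV x (smul k y)} = {k. leK g k}"
  proof (intro set_eqI iffI)
    fix k assume "k \<in> {k. leV x (smul k y)}"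
    then show "k \<in> {k. leK g k}" using g by (auto simp: is_glb_def lower_bounds_def)
  next
    fix k assume "k \<in> {k. leK g k}"
    then show "k \<in> {k. leV x (smul k y)}" using xg smul_monoK[of g k y] leV_trans by blast
  qed
  then show ?thesis by blast
qed simp

end

section \<open>a-linear functionals from coefficient systems\<close>

locale coefficient_system = idem_b_space addK mulK zeroK oneK addV smul
  for addK mulK :: "'k \<Rightarrow> 'k \<Rightarrow> 'k" and zeroK oneK :: 'k
    and addV :: "'v \<Rightarrow> 'v \<Rightarrow> 'v" and smul :: "'k \<Rightarrow> 'v \<Rightarrow> 'v" +
  fixes R :: "'v \<Rightarrow> 'k set"
  assumes principal: "R x = {} \<or> (\<exists>r. R x = {k. leK r k})"
    and antitone: "leV x y \<Longrightarrow> R y \<subseteq> R x"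
    and scale: "k \<noteq> zeroK \<Longrightarrow> R (smul k x) = mulK k ` R x"
    and closed: "y \<in> lower_bounds leV UNIV (upper_bounds leV UNIV S) \<Longrightarrow>
                   (\<Inter>x\<in>S. R x) \<subseteq> R y"
begin

abbreviation functional :: "'v \<Rightarrow> 'k set" where
  "functional \<equiv> \<lambda>x. lowK (R x)"

lemma sup_functional: "khat_sup addK (functional ` X) = lowK (\<Inter>x\<in>X. R x)"
  by (simp add: khat_sup_lowK_Inter principal)

lemma Inter_closure:
  "(\<Inter>y\<in>lower_bounds leV UNIV (upper_bounds leV UNIV S). R y) = (\<Inter>x\<in>S. R x)"
proof -
  have "S \<subseteq> lower_bounds leV UNIV (upper_bounds leV UNIV S)"
    by (auto simp: lower_bounds_def upper_bounds_def)
  with closed[of _ S] show ?thesis by blast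
qed

lemma R_add: "R (addV x y) = R x \<inter> R y"
proof
  show "R (addV x y) \<subseteq> R x \<inter> R y"
    using antitone[of x "addV x y"] antitone[of y "addV x y"] leV_add_iff[of x y "addV x y"]
    by simp
  have "addV x y \<in> lower_bounds leV UNIV (upper_bounds leV UNIV {x, y})"
    by (simp add: lower_bounds_def upper_bounds_def leV_add_iff)
  then show "R x \<inter> R y \<subseteq> R (addV x y)"
    using closed by fastforce
qed

lemma R_zero: "zeroK \<in> R (smul zeroK x)"
  using closed[of "smul zeroK x" "{}"] by (auto simp: lower_bounds_def)

lemma R_lub:
  assumes s: "is_lub leV UNIV X s"
  shows "R s = (\<Inter>x\<in>X. R x)"
proof -
  have "s \<in> lower_bounds leV UNIV (upper_bounds leV UNIV X)"
    and "\<forall>x\<in>X. leV x s"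
    using s by (auto simp: is_lub_def lower_bounds_def upper_bounds_def)
  then show ?thesis
    using closed antitone by blast
qed

lemma linear: "linear_functional addK mulK addV smul UNIV functional"
  unfolding linear_functional_def
proof (intro conjI ballI allI)
  fix x show "lowK (R x) \<in> cuts leK UNIV"
    by (simp add: cuts_def lowK_upK_lowK)
next
  fix x y show "lowK (R (addV x y)) = khat_sup addK {lowK (R x), lowK (R y)}"
    using sup_functional[of "{x, y}"] by (simp add: R_add)
next
  fix k x show "lowK (R (smul k x)) = khat_act addK mulK k (lowK (R x))"
  proof (cases "k = zeroK")
    case True
    have "mulK zeroK ` lowK (R x) = {zeroK}"
      using zero_lowK by auto
    then show ?thesis
      using True R_zero[of x] by (simp add: khat_act_eq lowK_zero upper_bounds_def)
  next
    case False
    then show ?thesis using scale lowK_scale by (simp add: khat_act_eq)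
  qed
qed

lemma b_linear: "b_linear_functional addK mulK addV smul UNIV functional"
  unfolding b_linear_functional_def by (simp add: linear R_lub sup_functional)

text \<open>The extension of the functional to the normal completion of V sends a cut A to
  the supremum of the values on A.\<close>

lemma sup_principal_cut: "khat_sup addK (functional ` principal_cut leV UNIV x) = lowK (R x)"
proof -
  have "(\<Inter>z\<in>principal_cut leV UNIV x. R z) = R x"
    using antitone by (auto simp: principal_cut_def lower_bounds_def)
  then show ?thesis by (simp add: sup_functional)
qed

lemma sup_cut_sup:
  "khat_sup addK (functional ` cut_sup leV UNIV \<A>) =
   khat_sup addK ((\<lambda>A. khat_sup addK (functional ` A)) ` \<A>)"
proof -
  have "khat_sup addK ((\<lambda>A. khat_sup addK (functional ` A)) ` \<A>) =
        lowK (upK (\<Union>A\<in>\<A>. lowK (upK (\<Union>(functional ` A)))))"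
    by (simp add: khat_sup_eq)
  also have "\<dots> = lowK (upK (\<Union>A\<in>\<A>. \<Union>(functional ` A)))"
    by (rule khat_sup_assoc)
  also have "(\<Union>A\<in>\<A>. \<Union>(functional ` A)) = \<Union>(functional ` \<Union>\<A>)"
    by blast
  also have "lowK (upK (\<Union>(functional ` \<Union>\<A>))) = khat_sup addK (functional ` \<Union>\<A>)"
    by (simp only: khat_sup_eq)
  also have "\<dots> = khat_sup addK (functional ` cut_sup leV UNIV \<A>)"
    unfolding sup_functional cut_sup_def Inter_closure ..
  finally show ?thesis by simp
qed

lemma is_a_linear: "a_linear UNIV functional"
  unfolding a_linear_functional_def
  by (intro conjI b_linear exI[of _ "\<lambda>A. khat_sup addK (functional ` A)"])
    (simp_all add: sup_principal_cut sup_cut_sup)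

end

context idem_b_space
begin

lemma a_linear_zero: "a_linear UNIV (\<lambda>x. {zeroK})"
proof -
  interpret coefficient_system addK mulK zeroK oneK addV smul "\<lambda>x. UNIV"
    by unfold_locales (simp_all add: UNIV_principal mulK_surj)
  show ?thesis
    using is_a_linear by (simp add: lowK_UNIV)
qed

text \<open>Level functional of a scalar-invariant d: the value is 0 below d and the top of
  Khat elsewhere.\<close>

lemma a_linear_level:
  assumes d: "\<forall>k. leV (smul k d) d"
  shows "a_linear UNIV (\<lambda>x. lowK (if leV x d then UNIV else {}))"
proof -
  interpret coefficient_system addK mulK zeroK oneK addV smul "\<lambda>x. if leV x d then UNIV else {}"
  proof unfold_locales
    fix x show "(if leV x d then UNIV else {}) = {} \<or>
      (\<exists>r. (if leV x d then UNIV else {}) = {k. leK r k})"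
      using UNIV_principal by simp
  next
    fix x y assume "leV x y"
    then show "(if leV y d then UNIV else {}) \<subseteq> (if leV x d then UNIV else {} :: 'k set)"
      using leV_trans[OF \<open>leV x y\<close>, of d] by (cases "leV y d") simp_all
  next
    fix k x assume k: "k \<noteq> zeroK"
    have "leV (smul k x) d \<longleftrightarrow> leV x d"
    proof
      assume "leV (smul k x) d"
      then have "leV x (smul (invK k) d)"
        using smul_monoV[of "smul k x" d "invK k"] k by (simp add: invK_smul_cancel)
      then show "leV x d" using d leV_trans by blast
    next
      assume "leV x d"
      then have "leV (smul k x) (smul k d)" by (rule smul_monoV)
      then show "leV (smul k x) d" using d leV_trans by blast
    qed
    then show "(if leV (smul k x) d then UNIV else {}) = mulK k ` (if leV x d then UNIV else {})"
      using mulK_surj[OF k] by simp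
  next
    fix S y assume "y \<in> lower_bounds leV UNIV (upper_bounds leV UNIV S)"
    then show "(\<Inter>x\<in>S. if leV x d then UNIV else {}) \<subseteq> (if leV y d then UNIV else {})"
      by (auto simp: lower_bounds_def upper_bounds_def split: if_splits)
  qed
  show ?thesis by (rule is_a_linear)
qed

lemma a_linear_gauge:
  assumes ng: "\<not> is_greatest leV UNIV y"
  shows "a_linear UNIV (\<lambda>x. lowK {k. leV x (smul k y)})"
proof -
  interpret coefficient_system addK mulK zeroK oneK addV smul "\<lambda>x. {k. leV x (smul k y)}"
  proof unfold_locales
    fix x show "{k. leV x (smul k y)} = {} \<or> (\<exists>r. {k. leV x (smul k y)} = {k. leK r k})"
      using dominating_scalars_principal[OF ng] .
  next
    fix x z assume "leV x z"
    then show "{k. leV z (smul k y)} \<subseteq> {k. leV x (smul k y)}"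
      using leV_trans by blast
  next
    fix k x assume k: "k \<noteq> zeroK"
    show "{m. leV (smul k x) (smul m y)} = mulK k ` {m. leV x (smul m y)}"
    proof (intro set_eqI iffI)
      fix m assume "m \<in> {m. leV (smul k x) (smul m y)}"
      then have "leV x (smul (mulK (invK k) m) y)"
        using smul_monoV[of "smul k x" "smul m y" "invK k"] k
        by (simp add: invK_smul_cancel smul_mul)
      moreover have "m = mulK k (mulK (invK k) m)"
        using k by (simp add: mul_invK_cancel)
      ultimately show "m \<in> mulK k ` {m. leV x (smul m y)}"
        by blast
    next
      fix m assume "m \<in> mulK k ` {m. leV x (smul m y)}"
      then show "m \<in> {m. leV (smul k x) (smul m y)}"
        by (auto simp: smul_mul smul_monoV)
    qed
  next
    fix S z assume "z \<in> lower_bounds leV UNIV (upper_bounds leV UNIV S)"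
    then show "(\<Inter>x\<in>S. {k. leV x (smul k y)}) \<subseteq> {k. leV z (smul k y)}"
      by (auto simp: lower_bounds_def upper_bounds_def)
  qed
  show ?thesis by (rule is_a_linear)
qed

section \<open>Separation\<close>

text \<open>If a \<not>\<le> b, then a is separated from b by the level functional of b (Boolean K; b
  is then scalar-invariant) or by the gauge functional of b, whose value at b lies below 1
  while its value at a does not.\<close>

lemma separate_not_le:
  assumes ab: "\<not> leV a b"
  shows "\<exists>f. a_linear UNIV f \<and> f a \<noteq> f b"
proof (cases "\<forall>k. leK k oneK")
  case True
  have d: "\<forall>k. leV (smul k b) b"
    using True smul_monoK[of _ oneK b] by simp
  have "oneK \<noteq> zeroK"
    using ab by (metis leV_zero smul_one)
  then have "lowK (if leV a b then UNIV else {}) \<noteq> lowK (if leV b b then UNIV else {})"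
    using ab by (auto simp: lowK_UNIV)
  then show ?thesis using a_linear_level[OF d] by blast
next
  case False
  then obtain k0 where k0: "\<not> leK k0 oneK" by blast
  have ng: "\<not> is_greatest leV UNIV b"
    using ab by (auto simp: is_greatest_def)
  have gb: "lowK {k. leV b (smul k b)} \<subseteq> {c. leK c oneK}"
    by (auto simp: lowK_iff)
  have "lowK {k. leV a (smul k b)} \<noteq> lowK {k. leV b (smul k b)}"
  proof
    assume eq: "lowK {k. leV a (smul k b)} = lowK {k. leV b (smul k b)}"
    show False
    proof (cases "{k. leV a (smul k b)} = {}")
      case True
      then show False using eq gb k0 by auto
    next
      case False
      then obtain r where r: "{k. leV a (smul k b)} = {k. leK r k}"
        using dominating_scalars_principal[OF ng, of a] by blast
      then have "leK r oneK"
        using eq gb by (auto simp: lowK_iff)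
      moreover have "leV a (smul r b)" using r by auto
      ultimately show False
        using ab smul_monoK[of r oneK b] leV_trans by auto
    qed
  qed
  then show ?thesis using a_linear_gauge[OF ng] by blast
qed

lemma separate:
  assumes "x \<noteq> y"
  shows "\<exists>f. a_linear UNIV f \<and> f x \<noteq> f y"
  using assms separate_not_le leV_antisym by metis

section \<open>Extension from a b-subspace\<close>

lemma linear_functional_mono:
  assumes f: "linear_functional addK mulK addV smul W f" and W: "x \<in> W" "y \<in> W"
    and le: "leV x y"
  shows "f x \<subseteq> f y"
proof -
  have "f (addV x y) = khat_sup addK {f x, f y}"
    using f W by (simp add: linear_functional_def)
  then have "f y = khat_sup addK {f x, f y}"
    using le by (simp add: idem_le_def)
  then show ?thesis using khat_sup_upper[of "f x" "{f x, f y}"] by simp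
qed

lemma principal_cut_cut: "x \<in> W \<Longrightarrow> principal_cut leV W x \<in> cuts leV W"
  by (auto simp: cuts_def principal_cut_def lower_bounds_def upper_bounds_def intro: leV_trans)

lemma cut_sup_unbounded:
  assumes "upper_bounds leV W D = {}" and "\<forall>d\<in>D. \<exists>A\<in>\<A>. d \<in> A"
  shows "cut_sup leV W \<A> = W"
proof -
  have "upper_bounds leV W (\<Union>\<A>) \<subseteq> upper_bounds leV W D"
    using assms(2) by (auto simp: upper_bounds_def)
  then show ?thesis using assms(1) by (simp add: cut_sup_def lower_bounds_def)
qed

text \<open>The point where a-linearity (rather than b-linearity) is used: if D \<subseteq> W has no
  upper bound in W, the extension F of f to the normal completion of W maps the top
  cut W to the supremum of f over D, which therefore dominates every value of f.\<close>

lemma a_linear_unbounded: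
  assumes f: "a_linear W f" and D: "D \<subseteq> W" "upper_bounds leV W D = {}" and w: "w \<in> W"
  shows "f w \<subseteq> khat_sup addK (f ` D)"
proof -
  obtain F where F_principal: "\<forall>x\<in>W. F (principal_cut leV W x) = f x"
    and F_sup: "\<forall>\<A>. \<A> \<subseteq> cuts leV W \<longrightarrow> F (cut_sup leV W \<A>) = khat_sup addK (F ` \<A>)"
    using f by (auto simp: a_linear_functional_def)
  have "cut_sup leV W {W} = W"
    using D by (intro cut_sup_unbounded) blast+
  then have "lower_bounds leV W (upper_bounds leV W W) = W"
    by (simp add: cut_sup_def)
  then have W_cut: "W \<in> cuts leV W"
    unfolding cuts_def mem_Collect_eq by (simp only: subset_refl simp_thms)
  have "cut_sup leV W (principal_cut leV W ` D) = W"
    using D leV_refl by (intro cut_sup_unbounded) (force simp: principal_cut_def lower_bounds_def)+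
  moreover have "principal_cut leV W ` D \<subseteq> cuts leV W"
    using principal_cut_cut D(1) by blast
  ultimately have "F W = khat_sup addK (F ` principal_cut leV W ` D)"
    using F_sup by metis
  also have "F ` principal_cut leV W ` D = f ` D"
    unfolding image_image using F_principal D(1) by (intro image_cong) auto
  finally have FW: "F W = khat_sup addK (f ` D)" .
  have "cut_sup leV W {principal_cut leV W w, W} = W"
    using D by (intro cut_sup_unbounded) blast+
  moreover have "{principal_cut leV W w, W} \<subseteq> cuts leV W"
    using principal_cut_cut[OF w] W_cut by blast
  ultimately have "F W = khat_sup addK {F (principal_cut leV W w), F W}"
    using F_sup by (metis image_insert image_empty)
  then have "f w \<subseteq> F W"
    using khat_sup_upper[of "f w" "{f w, F W}"] F_principal w by simp
  then show ?thesis using FW by simp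
qed

text \<open>Sublevel sets: if some value of f is not below \<beta>, the elements of W on which f
  stays below \<beta> are exactly those below a single element y0 (their supremum in W).\<close>

lemma sublevel_sup:
  assumes W: "b_subspace addV smul W" and f: "a_linear W f"
    and w1: "w1 \<in> W" "\<beta> \<notin> upK (f w1)"
  shows "\<exists>y0. \<not> leV w1 y0 \<and> (\<forall>w\<in>W. leV w y0 \<longleftrightarrow> \<beta> \<in> upK (f w))"
proof -
  define D where "D = {w\<in>W. \<beta> \<in> upK (f w)}"
  have lin: "linear_functional addK mulK addV smul W f"
    and blin: "\<And>X s. X \<subseteq> W \<Longrightarrow> is_lub leV W X s \<Longrightarrow> f s = khat_sup addK (f ` X)"
    using f by (simp_all add: a_linear_functional_def b_linear_functional_def)
  have DW: "D \<subseteq> W" by (auto simp: D_def)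
  have sup_D: "\<beta> \<in> upK (khat_sup addK (f ` D))"
    by (auto simp: upK_khat_sup D_def upK_iff)
  have "upper_bounds leV W D \<noteq> {}"
  proof
    assume "upper_bounds leV W D = {}"
    then have "f w1 \<subseteq> khat_sup addK (f ` D)"
      using a_linear_unbounded[OF f DW _ w1(1)] by blast
    then have "\<beta> \<in> upK (f w1)"
      using sup_D unfolding upK_iff by blast
    then show False using w1(2) by contradiction
  qed
  moreover have "b_complete_on leV W"
    using W by (simp add: b_subspace_def)
  ultimately obtain y0 where y0: "is_lub leV W D y0"
    using DW unfolding b_complete_on_def by blast
  have y0W: "y0 \<in> W"
    using y0 by (simp add: is_lub_def upper_bounds_def)
  have fy0: "\<beta> \<in> upK (f y0)"
    using sup_D blin[OF DW y0] by simp
  have "leV w y0 \<longleftrightarrow> \<beta> \<in> upK (f w)" if w: "w \<in> W" for w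
  proof
    assume "leV w y0"
    then show "\<beta> \<in> upK (f w)"
      using linear_functional_mono[OF lin w y0W] fy0 unfolding upK_iff by blast
  next
    assume "\<beta> \<in> upK (f w)"
    then show "leV w y0"
      using w y0 by (simp add: D_def is_lub_def upper_bounds_def)
  qed
  then show ?thesis using w1 by blast
qed

text \<open>Boolean case: with y0 the supremum of the zero set of f, the level functional of
  y0 agrees with f on W (each value of f is either 0 or the top of Khat).\<close>

lemma level_agrees:
  assumes bool: "\<forall>k. leK k oneK" and f: "linear_functional addK mulK addV smul W f"
    and y0: "\<forall>w\<in>W. leV w y0 \<longleftrightarrow> zeroK \<in> upK (f w)" and w: "w \<in> W"
  shows "lowK (if leV w y0 then UNIV else {}) = f w"
proof -
  have cut: "f w = lowK (upK (f w))"
    using f w cut_eq by (simp add: linear_functional_def)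
  show ?thesis
  proof (cases "zeroK \<in> upK (f w)")
    case True
    then show ?thesis using y0 w cut by (simp add: lowK_zero lowK_UNIV)
  next
    case False
    then obtain c where "c \<in> f w" "c \<noteq> zeroK"
      by (auto simp: upK_iff) (metis leK_refl)
    then have "oneK \<in> f w" using bool boolean_nonzero_eq_one by blast
    then have "lowK (upK (f w)) = UNIV"
      using bool leK_trans by (auto simp: lowK_iff upK_iff) blast
    then show ?thesis using False y0 w cut by simp
  qed
qed

text \<open>Non-Boolean case: with y0 the supremum of the elements where f stays below 1, the
  gauge functional of y0 agrees with f on W.  For nonzero k, w \<le> k y0 holds iff f w \<le> k,
  and the scalar 0 does not matter since K has no least positive element.\<close>

lemma gauge_agrees:
  assumes k0: "\<not> leK k0 oneK" and f: "linear_functional addK mulK addV smul W f"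
    and W: "\<And>k w. w \<in> W \<Longrightarrow> smul k w \<in> W"
    and y0: "\<forall>w\<in>W. leV w y0 \<longleftrightarrow> oneK \<in> upK (f w)" and w: "w \<in> W"
  shows "lowK {k. leV w (smul k y0)} = f w"
proof -
  have cut: "f w = lowK (upK (f w))"
    using f w cut_eq by (simp add: linear_functional_def)
  have f_smul: "f (smul k w) = khat_act addK mulK k (f w)" for k
    using f w by (simp add: linear_functional_def)
  have nonzero: "leV w (smul k y0) \<longleftrightarrow> k \<in> upK (f w)" if k: "k \<noteq> zeroK" for k
  proof -
    have "leV w (smul k y0) \<longleftrightarrow> oneK \<in> upK (khat_act addK mulK (invK k) (f w))"
      using le_smul_iff[OF k] y0 W[OF w] f_smul by simp
    also have "\<dots> \<longleftrightarrow> k \<in> upK (f w)"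
      using le_mul_iff[OF k, of _ oneK] by (simp add: upK_khat_act upK_iff)
    finally show ?thesis .
  qed
  have zero: "zeroK \<in> upK (f w)" if "leV w (smul zeroK y0)"
  proof -
    have "w = smul zeroK w"
      using that leV_antisym leV_zero by (metis leV_trans)
    then have eq: "f w = khat_act addK mulK zeroK (f w)"
      using f_smul by metis
    show ?thesis
      by (subst eq) (simp add: upK_khat_act)
  qed
  show ?thesis
  proof (cases "zeroK \<in> upK (f w)")
    case True
    then have "- {zeroK} \<subseteq> {k. leV w (smul k y0)}"
      using nonzero by (auto simp: upK_iff) (meson leK_trans leK_zero)
    then have "lowK {k. leV w (smul k y0)} \<subseteq> lowK (- {zeroK})"
      by (rule lowK_antimono)
    then have "lowK {k. leV w (smul k y0)} = {zeroK}"
      using lowK_nonzero[OF k0] zero_lowK by blast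
    then show ?thesis using True cut by (simp add: lowK_zero)
  next
    case False
    then have "{k. leV w (smul k y0)} = upK (f w)"
      using nonzero zero by (metis (mono_tags) Collect_mem_eq Collect_cong)
    then show ?thesis using cut by simp
  qed
qed

text \<open>Extension when K is Boolean: use the level functional of the supremum of the zero
  set of f (a nonzero value c of f guarantees that this zero set is bounded).\<close>

lemma extension_boolean:
  assumes bool: "\<forall>k. leK k oneK" and W: "b_subspace addV smul W" and f: "a_linear W f"
    and w0: "w0 \<in> W" "c \<in> f w0" "c \<noteq> zeroK"
  shows "\<exists>g. a_linear UNIV g \<and> (\<forall>x\<in>W. g x = f x)"
proof -
  have lin: "linear_functional addK mulK addV smul W f"
    using f by (simp add: a_linear_functional_def b_linear_functional_def)
  have "zeroK \<notin> upK (f w0)"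
    using w0 leK_antisym[OF _ leK_zero] by (auto simp: upK_iff)
  then obtain y0 where y0: "\<forall>w\<in>W. leV w y0 \<longleftrightarrow> zeroK \<in> upK (f w)"
    using sublevel_sup[OF W f w0(1)] by blast
  have "\<forall>k. leV (smul k y0) y0"
    using bool smul_monoK[of _ oneK y0] by simp
  then show ?thesis
    using a_linear_level level_agrees[OF bool lin y0] by blast
qed

text \<open>Extension when K is not Boolean: rescaling w0 produces an element where f exceeds 1,
  so the set where f stays below 1 has a supremum y0 that is not the greatest element,
  and the gauge functional of y0 extends f.\<close>

lemma extension_nonboolean:
  assumes k0: "\<not> leK k0 oneK" and W: "b_subspace addV smul W" and f: "a_linear W f"
    and w0: "w0 \<in> W" "c \<in> f w0" "c \<noteq> zeroK"
  shows "\<exists>g. a_linear UNIV g \<and> (\<forall>x\<in>W. g x = f x)"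
proof -
  have lin: "linear_functional addK mulK addV smul W f"
    using f by (simp add: a_linear_functional_def b_linear_functional_def)
  have W_smul: "\<And>k w. w \<in> W \<Longrightarrow> smul k w \<in> W"
    using W by (simp add: b_subspace_def)
  define w1 where "w1 = smul (mulK k0 (invK c)) w0"
  have "oneK \<notin> upK (f w1)"
    using lin w0 k0 by (simp add: w1_def linear_functional_def upK_khat_act)
      (metis invK mulK_assoc one_r)
  then obtain y0 where ng: "\<not> leV w1 y0" and y0: "\<forall>w\<in>W. leV w y0 \<longleftrightarrow> oneK \<in> upK (f w)"
    using sublevel_sup[OF W f W_smul[OF w0(1)]] w1_def by blast
  have "\<not> is_greatest leV UNIV y0"
    using ng by (auto simp: is_greatest_def)
  then show ?thesis
    using a_linear_gauge gauge_agrees[OF k0 lin W_smul y0] by blast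
qed

text \<open>The extension theorem: the zero functional extends f if f vanishes on W; otherwise
  a nonzero value of f is available for the two constructions above.\<close>

lemma extension:
  assumes W: "b_subspace addV smul W" and f: "a_linear W f"
  shows "\<exists>g. a_linear UNIV g \<and> (\<forall>x\<in>W. g x = f x)"
proof (cases "\<forall>w\<in>W. f w = {zeroK}")
  case True
  then show ?thesis using a_linear_zero by auto
next
  case False
  then obtain w0 where w0: "w0 \<in> W" "f w0 \<noteq> {zeroK}" by blast
  moreover have "zeroK \<in> f w0"
    using f w0(1) zero_in_cut
    by (simp add: a_linear_functional_def b_linear_functional_def linear_functional_def)
  ultimately obtain c where c: "c \<in> f w0" "c \<noteq> zeroK" by blast
  show ?thesis
  proof (cases "\<forall>k. leK k oneK")
    case True
    then show ?thesis using extension_boolean[OF _ W f w0(1) c] by blast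
  next
    case False
    then show ?thesis using extension_nonboolean[OF _ W f w0(1) c] by blast
  qed
qed

end

theorem theorem7p3:
  fixes addK mulK :: "'k \<Rightarrow> 'k \<Rightarrow> 'k" and zeroK oneK :: 'k
    and addV :: "'v \<Rightarrow> 'v \<Rightarrow> 'v" and smul :: "'k \<Rightarrow> 'v \<Rightarrow> 'v"
  assumes K: "b_complete_semiring addK mulK zeroK oneK"
    and SF: "semifield mulK zeroK oneK"
    and V: "b_space addK mulK zeroK oneK addV smul"
  shows "(\<forall>W f. b_subspace addV smul W \<longrightarrow> a_linear_functional addK mulK addV smul W f \<longrightarrow>
            (\<exists>g. a_linear_functional addK mulK addV smul UNIV g \<and> (\<forall>x\<in>W. g x = f x)))
       \<and> (\<forall>x y. x \<noteq> y \<longrightarrow>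
            (\<exists>f. a_linear_functional addK mulK addV smul UNIV f \<and> f x \<noteq> f y))"
proof -
  interpret idem_b_space addK mulK zeroK oneK addV smul
    using K SF V by unfold_locales
  show ?thesis using extension separate by blast
qed

end
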